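(* Let $q=p^r$ be odd and $n\ge 1$. Let: - $g\in\mathbb{F}_q[x_1,\dots,x_n]$ be a polynomial of total degree $n(q-1)/2$; - $f\in\mathbb{F}_q[y]$ be a permutation polynomial of degree $q-2$; - $a\in\mathbb{F}_q$ be a non-square. Then $$h(x_1,\dots,x_n,y)=\bigl(g(x_1,\dots,x_n)^2-a\bigr)f(y)$$ is a permutation polynomial in $\mathbb{F}_q[x_1,\dots,x_n,y]$.
   Context: $\mathbb{F}_q$ is the finite field with $q=p^r$ elements. A polynomial in $m$ variables over $\mathbb{F}_q$ is a permutation polynomial (PP) if, for every $c\in\mathbb{F}_q$, the equation $h=c$ has exactly $q^{m-1}$ solutions in $\mathbb{F}_q^m$. A univariate PP is a polynomial inducing a bijection of $\mathbb{F}_q$. *)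

theory Defs
  imports "HOL-Library.Poly_Mapping" "HOL-Library.FuncSet"
    "HOL-Computational_Algebra.Polynomial"
begin

text \<open>Multivariate polynomials over a ring 'a in variables x_0, x_1, ...:
  finitely supported maps from monomials (exponent vectors nat =>0 nat) to coefficients.\<close>
type_synonym 'a mpoly = "(nat \<Rightarrow>\<^sub>0 nat) \<Rightarrow>\<^sub>0 'a"

definition mpoly_eval :: "'a::comm_semiring_1 mpoly \<Rightarrow> (nat \<Rightarrow> 'a) \<Rightarrow> 'a" where
  "mpoly_eval p x =
     (\<Sum>m\<in>Poly_Mapping.keys p. Poly_Mapping.lookup p m *
        (\<Prod>i\<in>Poly_Mapping.keys m. x i ^ Poly_Mapping.lookup m i))"

definition total_degree :: "'a::zero mpoly \<Rightarrow> nat" where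
  "total_degree p = Max (insert 0
     ((\<lambda>m. \<Sum>i\<in>Poly_Mapping.keys m. Poly_Mapping.lookup m i) ` Poly_Mapping.keys p))"

definition mpoly_in_vars :: "nat \<Rightarrow> 'a::zero mpoly \<Rightarrow> bool" where
  "mpoly_in_vars n p \<longleftrightarrow> (\<forall>m\<in>Poly_Mapping.keys p. Poly_Mapping.keys m \<subseteq> {..<n})"

definition mpoly_const :: "'a::zero \<Rightarrow> 'a mpoly" where
  "mpoly_const c = Poly_Mapping.single 0 c"

definition poly_in_var :: "nat \<Rightarrow> 'a::comm_semiring_1 poly \<Rightarrow> 'a mpoly" where
  "poly_in_var k f = (\<Sum>i\<le>degree f. Poly_Mapping.single (Poly_Mapping.single k i) (coeff f i))"

text \<open>Permutation polynomial in m variables x_0..x_(m-1) over finite field 'a: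
  each value c is attained at exactly q^(m-1) points of F_q^m.\<close>
definition is_mpp :: "nat \<Rightarrow> 'a::{finite,field} mpoly \<Rightarrow> bool" where
  "is_mpp m h \<longleftrightarrow> (\<forall>c::'a.
     card {x \<in> PiE {..<m} (\<lambda>_. UNIV). mpoly_eval h x = c} = card (UNIV::'a set) ^ (m - 1))"

definition is_pp :: "'a::{finite,field} poly \<Rightarrow> bool" where
  "is_pp f \<longleftrightarrow> bij (poly f)"

end

theory Submission imports Defs begin

text \<open>On every point of \<open>\<bbbF>\<^sub>q\<^sup>n\<^sup>+\<^sup>1\<close> the factor \<open>g\<^sup>2 - a\<close> is nonzero, since \<open>a\<close> is a non-square, and it
  does not depend on \<open>y\<close>. Hence for each fixed \<open>(x\<^sub>1, \<dots>, x\<^sub>n)\<close> the map \<open>y \<mapsto> h(x, y)\<close> is a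
  nonzero multiple of the bijection \<open>f\<close>, so every value \<open>c\<close> is taken for exactly one \<open>y\<close>,
  and the fibre \<open>h = c\<close> is the graph of a function of \<open>(x\<^sub>1, \<dots>, x\<^sub>n)\<close>, with \<open>q\<^sup>n\<close> points.\<close>

definition monomial_eval :: "(nat \<Rightarrow>\<^sub>0 nat) \<Rightarrow> (nat \<Rightarrow> 'a::comm_semiring_1) \<Rightarrow> 'a" where
  "monomial_eval m x = (\<Prod>i\<in>Poly_Mapping.keys m. x i ^ Poly_Mapping.lookup m i)"

lemma monomial_eval_superset:
  assumes "finite S" "Poly_Mapping.keys m \<subseteq> S"
  shows "monomial_eval m x = (\<Prod>i\<in>S. x i ^ Poly_Mapping.lookup m i)"
  unfolding monomial_eval_def
  by (rule prod.mono_neutral_left) (use assms in \<open>auto simp: in_keys_iff\<close>)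

lemma monomial_eval_add: "monomial_eval (m1 + m2) x = monomial_eval m1 x * monomial_eval m2 x"
proof -
  let ?S = "Poly_Mapping.keys m1 \<union> Poly_Mapping.keys m2"
  have "monomial_eval (m1 + m2) x = (\<Prod>i\<in>?S. x i ^ Poly_Mapping.lookup (m1 + m2) i)"
    by (rule monomial_eval_superset) (auto simp: keys_add)
  also have "\<dots> = (\<Prod>i\<in>?S. x i ^ Poly_Mapping.lookup m1 i) * (\<Prod>i\<in>?S. x i ^ Poly_Mapping.lookup m2 i)"
    by (simp add: lookup_add power_add prod.distrib)
  also have "\<dots> = monomial_eval m1 x * monomial_eval m2 x"
    using monomial_eval_superset[of ?S m1 x] monomial_eval_superset[of ?S m2 x] by simp
  finally show ?thesis .
qed

lemma mpoly_eval_superset: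
  assumes "finite S" "Poly_Mapping.keys p \<subseteq> S"
  shows "mpoly_eval p x = (\<Sum>m\<in>S. Poly_Mapping.lookup p m * monomial_eval m x)"
  unfolding mpoly_eval_def monomial_eval_def[symmetric]
  by (rule sum.mono_neutral_left) (use assms in \<open>auto simp: in_keys_iff\<close>)

lemma mpoly_eval_add: "mpoly_eval (p + q) x = mpoly_eval p x + mpoly_eval q x"
proof -
  let ?S = "Poly_Mapping.keys p \<union> Poly_Mapping.keys q"
  have "mpoly_eval (p + q) x = (\<Sum>m\<in>?S. Poly_Mapping.lookup (p + q) m * monomial_eval m x)"
    by (rule mpoly_eval_superset) (auto simp: keys_add)
  also have "\<dots> = (\<Sum>m\<in>?S. Poly_Mapping.lookup p m * monomial_eval m x)
                + (\<Sum>m\<in>?S. Poly_Mapping.lookup q m * monomial_eval m x)"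
    by (simp add: lookup_add distrib_right sum.distrib)
  also have "\<dots> = mpoly_eval p x + mpoly_eval q x"
    using mpoly_eval_superset[of ?S p x] mpoly_eval_superset[of ?S q x] by simp
  finally show ?thesis .
qed

lemma mpoly_eval_zero [simp]: "mpoly_eval 0 x = 0"
  by (simp add: mpoly_eval_def)

lemma mpoly_eval_sum: "mpoly_eval (sum p A) x = (\<Sum>a\<in>A. mpoly_eval (p a) x)"
  by (induction A rule: infinite_finite_induct) (auto simp: mpoly_eval_add)

lemma mpoly_eval_single: "mpoly_eval (Poly_Mapping.single m c) x = c * monomial_eval m x"
  by (simp add: mpoly_eval_def monomial_eval_def)

lemma mpoly_eval_diff:
  fixes x :: "nat \<Rightarrow> 'a::comm_ring_1"
  shows "mpoly_eval (p - q) x = mpoly_eval p x - mpoly_eval q x"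
  using mpoly_eval_add[of "p - q" q x] by (simp add: eq_diff_eq)

lemma mpoly_as_sum_single:
  "p = (\<Sum>m\<in>Poly_Mapping.keys p. Poly_Mapping.single m (Poly_Mapping.lookup p m))"
  by (rule poly_mapping_eqI) (auto simp: lookup_sum lookup_single when_def in_keys_iff)

lemma mpoly_eval_mult: "mpoly_eval (p * q) x = mpoly_eval p x * mpoly_eval q x"
proof -
  let ?P = "Poly_Mapping.keys p" and ?Q = "Poly_Mapping.keys q"
  have "p * q = (\<Sum>k\<in>?P. Poly_Mapping.single k (Poly_Mapping.lookup p k)) *
                (\<Sum>l\<in>?Q. Poly_Mapping.single l (Poly_Mapping.lookup q l))"
    by (subst (1 2) mpoly_as_sum_single) (rule refl)
  also have "\<dots> = (\<Sum>k\<in>?P. \<Sum>l\<in>?Q.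
      Poly_Mapping.single (k + l) (Poly_Mapping.lookup p k * Poly_Mapping.lookup q l))"
    by (simp add: sum_product mult_single)
  finally have "mpoly_eval (p * q) x = (\<Sum>k\<in>?P. \<Sum>l\<in>?Q.
      Poly_Mapping.lookup p k * Poly_Mapping.lookup q l * monomial_eval (k + l) x)"
    by (simp add: mpoly_eval_sum mpoly_eval_single)
  also have "\<dots> = (\<Sum>k\<in>?P. Poly_Mapping.lookup p k * monomial_eval k x) *
                  (\<Sum>l\<in>?Q. Poly_Mapping.lookup q l * monomial_eval l x)"
    by (simp add: sum_product monomial_eval_add mult_ac)
  finally show ?thesis
    by (simp add: mpoly_eval_def monomial_eval_def)
qed

lemma mpoly_eval_const [simp]: "mpoly_eval (mpoly_const c) x = c"
  by (simp add: mpoly_const_def mpoly_eval_single monomial_eval_def)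

lemma mpoly_eval_poly_in_var [simp]: "mpoly_eval (poly_in_var k f) x = poly f (x k)"
proof -
  have "mpoly_eval (poly_in_var k f) x = (\<Sum>i\<le>degree f. coeff f i * x k ^ i)"
    unfolding poly_in_var_def mpoly_eval_sum mpoly_eval_single
    by (intro sum.cong refl) (auto simp: monomial_eval_def)
  then show ?thesis
    by (simp add: poly_altdef)
qed

lemma mpoly_eval_cong_in_vars:
  assumes "mpoly_in_vars n p" "\<And>i. i < n \<Longrightarrow> x i = y i"
  shows "mpoly_eval p x = mpoly_eval p y"
  using assms unfolding mpoly_eval_def mpoly_in_vars_def
  by (intro sum.cong refl arg_cong2[where f = "(*)"] prod.cong) (metis lessThan_iff subsetD)

lemma card_PiE_graph:
  fixes \<phi> :: "(nat \<Rightarrow> 'a::finite) \<Rightarrow> 'a"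
  assumes \<phi>_cong: "\<And>x y. (\<And>i. i < n \<Longrightarrow> x i = y i) \<Longrightarrow> \<phi> x = \<phi> y"
  shows "card {x \<in> PiE {..<Suc n} (\<lambda>_. UNIV). x n = \<phi> x} = card (UNIV :: 'a set) ^ n"
proof -
  let ?S = "{x \<in> PiE {..<Suc n} (\<lambda>_. UNIV). x n = \<phi> x}"
  have "bij_betw (\<lambda>x. restrict x {..<n}) ?S (PiE {..<n} (\<lambda>_. UNIV))"
  proof (rule bij_betw_byWitness[where f' = "\<lambda>x. x(n := \<phi> x)"])
    show "\<forall>x\<in>?S. (restrict x {..<n})(n := \<phi> (restrict x {..<n})) = x"
    proof
      fix x assume "x \<in> ?S"
      moreover have "\<phi> (restrict x {..<n}) = \<phi> x"
        by (rule \<phi>_cong) simp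
      ultimately show "(restrict x {..<n})(n := \<phi> (restrict x {..<n})) = x"
        by (auto simp: PiE_def extensional_def fun_eq_iff)
    qed
    show "(\<lambda>x. x(n := \<phi> x)) ` PiE {..<n} (\<lambda>_. UNIV) \<subseteq> ?S"
    proof (rule image_subsetI)
      fix x :: "nat \<Rightarrow> 'a" assume "x \<in> PiE {..<n} (\<lambda>_. UNIV)"
      moreover have "\<phi> (x(n := \<phi> x)) = \<phi> x"
        by (rule \<phi>_cong) simp
      ultimately show "x(n := \<phi> x) \<in> ?S"
        by (auto simp: PiE_def extensional_def)
    qed
  qed (auto simp: PiE_def extensional_def fun_eq_iff)
  then show ?thesis
    by (simp add: bij_betw_same_card card_PiE)
qed

lemma card_fibre_mult_bij:
  fixes u :: "(nat \<Rightarrow> 'a::{finite,field}) \<Rightarrow> 'a" and v :: "'a \<Rightarrow> 'a"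
  assumes u_cong: "\<And>x y. (\<And>i. i < n \<Longrightarrow> x i = y i) \<Longrightarrow> u x = u y"
    and u_nonzero: "\<And>x. u x \<noteq> 0"
    and "bij v"
  shows "card {x \<in> PiE {..<Suc n} (\<lambda>_. UNIV). u x * v (x n) = c} = card (UNIV :: 'a set) ^ n"
proof -
  define \<phi> where "\<phi> x = inv v (c / u x)" for x
  have "u x * v y = c \<longleftrightarrow> y = \<phi> x" for x y
  proof -
    have "u x * v y = c \<longleftrightarrow> v y = c / u x"
      using u_nonzero[of x] by (auto simp: field_simps)
    also have "\<dots> \<longleftrightarrow> y = \<phi> x"
      unfolding \<phi>_def using \<open>bij v\<close> by (metis bij_inv_eq_iff)
    finally show ?thesis .
  qed
  moreover have "card {x \<in> PiE {..<Suc n} (\<lambda>_. UNIV). x n = \<phi> x} = card (UNIV :: 'a set) ^ n"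
    unfolding \<phi>_def by (rule card_PiE_graph) (metis u_cong)
  ultimately show ?thesis
    by simp
qed

lemma square_minus_nonsquare_nonzero:
  fixes a b :: "'a::comm_ring_1"
  assumes "\<not> (\<exists>b. b ^ 2 = a)"
  shows "b * b - a \<noteq> 0"
  using assms by (metis eq_iff_diff_eq_0 power2_eq_square)

theorem mainTheorem6:
  fixes g :: "'a::{finite,field} mpoly" and f :: "'a poly" and a :: 'a and n :: nat
  assumes "odd (card (UNIV::'a set))"
    and "n \<ge> 1"
    and "mpoly_in_vars n g"
    and "total_degree g = n * (card (UNIV::'a set) - 1) div 2"
    and "is_pp f"
    and "degree f = card (UNIV::'a set) - 2"
    and "\<not> (\<exists>b::'a. b ^ 2 = a)"
  shows "is_mpp (n + 1) ((g * g - mpoly_const a) * poly_in_var n f)"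
proof -
  define u where "u x = mpoly_eval g x * mpoly_eval g x - a" for x
  have eval_h: "mpoly_eval ((g * g - mpoly_const a) * poly_in_var n f) x = u x * poly f (x n)" for x
    by (simp add: mpoly_eval_mult mpoly_eval_diff u_def)
  have "card {x \<in> PiE {..<Suc n} (\<lambda>_. UNIV). u x * poly f (x n) = c} = card (UNIV :: 'a set) ^ n" for c
  proof (rule card_fibre_mult_bij)
    show "u x = u y" if "\<And>i. i < n \<Longrightarrow> x i = y i" for x y
      unfolding u_def using mpoly_eval_cong_in_vars[OF assms(3) that] by simp
    show "u x \<noteq> 0" for x
      unfolding u_def using assms(7) by (rule square_minus_nonsquare_nonzero)
    show "bij (poly f)"
      using assms(5) by (simp add: is_pp_def)
  qed
  then show ?thesis
    by (simp add: is_mpp_def eval_h)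
qed

end
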